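(* Let $\Sigma$ be an alphabet, $n\ge1$, $L\ge n$. Let $h_1:\Sigma\to\mathrm{GF}(2)[x]/(x^L+1)$ be a random function whose values $h_1(c)$, $c\in\Sigma$, are mutually independent and uniformly distributed on $\mathrm{GF}(2)[x]/(x^L+1)$, and define $h(a_1,\dots,a_n)=h_1(a_1)x^{n-1}+\cdots+h_1(a_{n-1})x+h_1(a_n)$ computed in $\mathrm{GF}(2)[x]/(x^L+1)$. Then: (i) if $n$ is even, $h$ is not uniform; indeed for any $a\in\Sigma$, $P(h(a,a,\dots,a)=0)\ge 2^{-(L-1)}$. (ii) If $n\ge 2$ and $|\Sigma|\ge2$, there exist distinct $n$-grams $w_1,w_2$ with $P(h(w_1)=h(w_2))\ge 2^{-(L-1)}>2^{-L}$; hence $h$ is not 2-universal and not pairwise independent.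
   Context: This hash family is called Cyclic. Elements of $\mathrm{GF}(2)[x]/(x^L+1)$ are identified with polynomials of degree at most $L-1$ over $\mathrm{GF}(2)$ (equivalently $L$-bit integers), and multiplication by $x$ is a cyclic left rotation of the bits. Uniform means $P(h(w)=y)=2^{-L}$ for all $n$-grams $w$ and all $y$; 2-universal means $P(h(w_1)=h(w_2))\le 2^{-L}$ for all distinct $w_1,w_2$. *)

theory Defs
  imports "HOL-Probability.Probability" "HOL-Library.Z2" "HOL-Computational_Algebra.Polynomial"
begin

text \<open>The ring GF(2)[x]/(x^L+1): elements are represented by their canonical
  representatives, the polynomials over GF(2) (type bit) of degree at most L-1.\<close>

definition cyc_elems :: "nat \<Rightarrow> bit poly set" where
  "cyc_elems L = {p. p = 0 \<or> degree p < L}"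

definition cyc_modulus :: "nat \<Rightarrow> bit poly" where
  "cyc_modulus L = monom 1 L + 1"

definition cyc_red :: "nat \<Rightarrow> bit poly \<Rightarrow> bit poly" where
  "cyc_red L p = p mod cyc_modulus L"

definition cyclic_hash :: "nat \<Rightarrow> nat \<Rightarrow> ('a \<Rightarrow> bit poly) \<Rightarrow> 'a list \<Rightarrow> bit poly" where
  "cyclic_hash L n h1 w = cyc_red L (\<Sum>i<n. h1 (w ! i) * monom 1 (n - 1 - i))"

text \<open>Random h1: values h1(c), c in Sigma, independent and uniform on the ring,
  i.e. h1 is uniformly distributed over all functions Sigma -> ring.\<close>

definition random_h1 :: "nat \<Rightarrow> ('a::finite \<Rightarrow> bit poly) pmf" where
  "random_h1 L = pmf_of_set {f. \<forall>c. f c \<in> cyc_elems L}"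

definition ngrams :: "nat \<Rightarrow> 'a list set" where
  "ngrams n = {w. length w = n}"

definition uniform_family :: "nat \<Rightarrow> nat \<Rightarrow> ('a list \<Rightarrow> bit poly) pmf \<Rightarrow> bool" where
  "uniform_family L n H \<longleftrightarrow>
     (\<forall>w \<in> ngrams n. \<forall>y \<in> cyc_elems L. measure_pmf.prob H {h. h w = y} = 1 / 2 ^ L)"

definition two_universal :: "nat \<Rightarrow> nat \<Rightarrow> ('a list \<Rightarrow> bit poly) pmf \<Rightarrow> bool" where
  "two_universal L n H \<longleftrightarrow>
     (\<forall>w1 \<in> ngrams n. \<forall>w2 \<in> ngrams n. w1 \<noteq> w2 \<longrightarrow>
        measure_pmf.prob H {h. h w1 = h w2} \<le> 1 / 2 ^ L)"

definition pairwise_independent :: "nat \<Rightarrow> nat \<Rightarrow> ('a list \<Rightarrow> bit poly) pmf \<Rightarrow> bool" where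
  "pairwise_independent L n H \<longleftrightarrow>
     (\<forall>w1 \<in> ngrams n. \<forall>w2 \<in> ngrams n. w1 \<noteq> w2 \<longrightarrow>
       (\<forall>y1 \<in> cyc_elems L. \<forall>y2 \<in> cyc_elems L.
          measure_pmf.prob H {h. h w1 = y1 \<and> h w2 = y2} = 1 / 2 ^ (2 * L)))"

definition cyclic_family :: "nat \<Rightarrow> nat \<Rightarrow> ('a::finite list \<Rightarrow> bit poly) pmf" where
  "cyclic_family L n = map_pmf (cyclic_hash L n) (random_h1 L)"

end

theory Submission
  imports Defs
begin

(* Over GF(2), x^L + 1 = (x + 1) g with g = 1 + x + ... + x^(L-1), so (x + 1) g = 0 in the ring
   although g is a nonzero element of it. For even n the unreduced hash of a...a is
   h1(a) (1 + x + ... + x^(n-1)), and x + 1 divides the second factor; the n-grams ab a...a and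
   ba a...a have unreduced hashes differing by (h1(a) - h1(b)) x^(n-2) (x + 1). Hence the hash
   vanishes (resp. the two hashes collide) as soon as h1(a) (resp. h1(a) - h1(b)) lies in {0, g}:
   an event of probability 2 / 2^L, because that value is uniformly distributed. *)

lemma bit_poly_uminus [simp]: "- (p :: bit poly) = p"
  by (simp add: poly_eq_iff)

lemma bit_poly_diff_eq_add: "(p :: bit poly) - q = p + q"
  by (simp add: diff_conv_add_uminus)

lemma degree_Poly_less:
  assumes "Poly xs \<noteq> 0"
  shows "degree (Poly xs) < length xs"
proof -
  have "degree (Poly xs) \<le> length xs - 1"
    by (intro degree_le) (auto simp: nth_default_def)
  moreover have "xs \<noteq> []"
    using assms by auto
  ultimately show ?thesis
    by (cases xs) auto
qed

lemma card_polys_degree_less: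
  assumes "finite (UNIV :: 'a::zero set)"
  shows "card {p :: 'a poly. p = 0 \<or> degree p < n} = CARD('a) ^ n"
proof -
  have "bij_betw Poly {xs. length xs = n} {p :: 'a poly. p = 0 \<or> degree p < n}"
  proof (rule bij_betw_byWitness[where f' = "\<lambda>p. map (coeff p) [0..<n]"])
    show "\<forall>xs\<in>{xs. length xs = n}. map (coeff (Poly xs)) [0..<n] = xs"
      by (auto intro: nth_equalityI simp: nth_default_def)
    show "\<forall>p\<in>{p. p = 0 \<or> degree p < n}. Poly (map (coeff p) [0..<n]) = p"
      by (auto intro!: poly_eqI simp: nth_default_def coeff_eq_0)
    show "Poly ` {xs. length xs = n} \<subseteq> {p. p = 0 \<or> degree p < n}"
      by (auto dest: degree_Poly_less)
    show "(\<lambda>p. map (coeff p) [0..<n]) ` {p. p = 0 \<or> degree p < n} \<subseteq> {xs. length xs = n}"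
      by auto
  qed
  then show ?thesis
    using card_lists_length_eq[OF assms, of n] by (simp add: bij_betw_same_card)
qed

lemma UNIV_bit: "(UNIV :: bit set) = {0, 1}"
  by (auto intro: bit.exhaust)

lemma card_cyc_elems: "card (cyc_elems L) = 2 ^ L"
  by (simp add: cyc_elems_def card_polys_degree_less UNIV_bit numeral_2_eq_2)

lemma finite_cyc_elems: "finite (cyc_elems L)"
  by (rule card_ge_0_finite) (simp add: card_cyc_elems)

lemma zero_in_cyc_elems: "0 \<in> cyc_elems L"
  by (simp add: cyc_elems_def)

lemma cyc_elems_diff: "p \<in> cyc_elems L \<Longrightarrow> q \<in> cyc_elems L \<Longrightarrow> p - q \<in> cyc_elems L"
  unfolding cyc_elems_def using degree_diff_le_max[of p q] by auto

lemma degree_cyc_modulus: "L \<ge> 1 \<Longrightarrow> degree (cyc_modulus L) = L"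
  by (simp add: cyc_modulus_def degree_add_eq_left degree_monom_eq)

lemma cyc_red_in_cyc_elems:
  assumes "L \<ge> 1"
  shows "cyc_red L p \<in> cyc_elems L"
proof -
  have "cyc_modulus L \<noteq> 0"
    using degree_cyc_modulus[OF assms] assms by auto
  then show ?thesis
    using degree_mod_less'[of "cyc_modulus L" p] degree_cyc_modulus[OF assms]
    by (auto simp: cyc_red_def cyc_elems_def)
qed

definition all_ones_poly :: "nat \<Rightarrow> 'a::comm_semiring_1 poly" where
  "all_ones_poly n = (\<Sum>i<n. monom 1 i)"

lemma coeff_all_ones_poly: "coeff (all_ones_poly n) i = (if i < n then 1 else 0)"
  by (simp add: all_ones_poly_def coeff_sum coeff_monom)

lemma all_ones_poly_Suc: "all_ones_poly (Suc n) = monom 1 n + all_ones_poly n"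
  by (simp add: all_ones_poly_def add.commute)

lemma all_ones_poly_nonzero: "n \<noteq> 0 \<Longrightarrow> all_ones_poly n \<noteq> (0 :: 'a::comm_semiring_1 poly)"
  using coeff_all_ones_poly[of n 0] by (metis coeff_0 zero_neq_one neq0_conv)

lemma all_ones_poly_in_cyc_elems: "all_ones_poly L \<in> cyc_elems L"
proof (cases L)
  case (Suc k)
  have "degree (all_ones_poly L :: bit poly) \<le> k"
    by (rule degree_le) (simp add: coeff_all_ones_poly Suc)
  then show ?thesis
    by (simp add: cyc_elems_def Suc)
qed (simp add: cyc_elems_def all_ones_poly_def)

lemma cyc_modulus_eq_mult: "cyc_modulus L = [:1, 1:] * all_ones_poly L"
proof -
  have "[:0, 1:] ^ L - 1 = ([:0, 1:] - 1) * (\<Sum>i<L. [:0, 1:] ^ i :: bit poly)"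
    by (rule power_diff_1_eq)
  then show ?thesis
    by (simp add: cyc_modulus_def all_ones_poly_def monom_altdef bit_poly_diff_eq_add one_pCons)
qed

lemma pCons_one_one_dvd_all_ones_poly:
  assumes "even n"
  shows "[:1, 1:] dvd (all_ones_poly n :: bit poly)"
proof -
  have "poly (all_ones_poly n :: bit poly) 1 = of_nat n"
    by (simp add: all_ones_poly_def poly_sum poly_monom)
  also have "\<dots> = 0"
    using assms by (auto elim: evenE)
  finally show ?thesis
    using poly_eq_0_iff_dvd[of "all_ones_poly n :: bit poly" 1] by simp
qed

lemma cyc_modulus_dvd_mult:
  assumes "p \<in> {0, all_ones_poly L}" and "[:1, 1:] dvd q"
  shows "cyc_modulus L dvd p * q"
proof -
  obtain r where "q = [:1, 1:] * r"
    using assms(2) by blast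
  then have "all_ones_poly L * q = cyc_modulus L * r"
    unfolding cyc_modulus_eq_mult by (simp only: mult_ac)
  then show ?thesis
    using assms(1) by auto
qed

definition ngram_poly :: "nat \<Rightarrow> ('a \<Rightarrow> 'b::comm_semiring_1 poly) \<Rightarrow> 'a list \<Rightarrow> 'b poly" where
  "ngram_poly n h1 w = (\<Sum>i<n. h1 (w ! i) * monom 1 (n - 1 - i))"

lemma cyclic_hash_eq_cyc_red: "cyclic_hash L n h1 w = cyc_red L (ngram_poly n h1 w)"
  by (simp add: cyclic_hash_def ngram_poly_def)

lemma cyclic_hash_in_cyc_elems: "L \<ge> 1 \<Longrightarrow> cyclic_hash L n h1 w \<in> cyc_elems L"
  by (simp add: cyclic_hash_eq_cyc_red cyc_red_in_cyc_elems)

lemma ngram_poly_Cons: "ngram_poly (Suc n) h1 (c # w) = h1 c * monom 1 n + ngram_poly n h1 w"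
  unfolding ngram_poly_def sum.lessThan_Suc_shift by simp

lemma ngram_poly_replicate: "ngram_poly n h1 (replicate n c) = h1 c * all_ones_poly n"
proof (induction n)
  case 0
  then show ?case
    by (simp add: ngram_poly_def all_ones_poly_def)
next
  case (Suc n)
  then show ?case
    by (simp add: ngram_poly_Cons all_ones_poly_Suc distrib_left)
qed

lemma ngram_poly_swap:
  fixes h1 :: "'a \<Rightarrow> 'b::comm_ring_1 poly"
  shows "ngram_poly (Suc (Suc n)) h1 (a # b # w) - ngram_poly (Suc (Suc n)) h1 (b # a # w)
    = (h1 a - h1 b) * (monom 1 (Suc n) - monom 1 n)"
  by (simp add: ngram_poly_Cons algebra_simps)

lemma cyclic_hash_replicate_eq_0:
  assumes "even n" and "h1 a \<in> {0, all_ones_poly L}"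
  shows "cyclic_hash L n h1 (replicate n a) = 0"
  using cyc_modulus_dvd_mult[OF assms(2) pCons_one_one_dvd_all_ones_poly[OF assms(1)]]
  by (simp add: cyclic_hash_eq_cyc_red ngram_poly_replicate cyc_red_def)

lemma cyclic_hash_swap_eq:
  assumes "h1 a - h1 b \<in> {0, all_ones_poly L}"
  shows "cyclic_hash L (Suc (Suc n)) h1 (a # b # w) = cyclic_hash L (Suc (Suc n)) h1 (b # a # w)"
proof -
  have "monom 1 (Suc n) - monom 1 n = [:1, 1:] * (monom 1 n :: bit poly)"
    by (simp add: monom_Suc bit_poly_diff_eq_add)
  then have "cyc_modulus L dvd (h1 a - h1 b) * (monom 1 (Suc n) - monom 1 n)"
    using cyc_modulus_dvd_mult[OF assms dvd_triv_left] by metis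
  then show ?thesis
    by (simp add: cyclic_hash_eq_cyc_red cyc_red_def mod_eq_dvd_iff ngram_poly_swap)
qed

lemma measure_pmf_of_set_coordinate_diff:
  fixes a :: "'a::finite" and c :: "('a \<Rightarrow> 'b::ab_group_add) \<Rightarrow> 'b"
  assumes A: "finite A" "t \<in> A" and diff_closed: "\<And>x y. x \<in> A \<Longrightarrow> y \<in> A \<Longrightarrow> x - y \<in> A"
    and c_indep: "\<And>f y. c (f(a := y)) = c f"
    and c_range: "\<And>f. \<forall>x. f x \<in> A \<Longrightarrow> c f \<in> A"
  shows "measure_pmf.prob (pmf_of_set {f. \<forall>x. f x \<in> A}) {f. f a - c f = t} = 1 / card A"
proof -
  define F :: "('a \<Rightarrow> 'b) set" where "F = {f. \<forall>x. f x \<in> A}"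
  define E :: "'b \<Rightarrow> ('a \<Rightarrow> 'b) set" where "E s = {f. f a - c f = s}" for s
  define M where "M = pmf_of_set F"
  have "F = PiE UNIV (\<lambda>_. A)"
    by (auto simp: F_def PiE_UNIV_domain)
  then have "finite F"
    using A by (auto intro!: finite_PiE)
  moreover have "(\<lambda>_. t) \<in> F"
    using A by (simp add: F_def)
  ultimately have F: "finite F" "F \<noteq> {}"
    by auto
  have add_closed: "x + y \<in> A" if "x \<in> A" "y \<in> A" for x y
    using diff_closed[OF that(1) diff_closed[OF diff_closed[OF that(2) that(2)] that(2)]] by simp
  have prob_shift: "measure_pmf.prob M (E u) = measure_pmf.prob M (E (u + s))" if "s \<in> A" for u s
  proof -
    have "bij_betw (\<lambda>f. f(a := f a - s)) F F"
      by (rule bij_betw_byWitness[where f' = "\<lambda>f. f(a := f a + s)"])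
        (auto simp: F_def intro!: diff_closed add_closed that)
    then have "map_pmf (\<lambda>f. f(a := f a - s)) M = M"
      unfolding M_def by (rule map_pmf_of_set_bij_betw[OF _ F(2,1)])
    moreover have "(\<lambda>f. f(a := f a - s)) -` E u = E (u + s)"
      by (auto simp: E_def c_indep algebra_simps)
    ultimately show ?thesis
      using measure_map_pmf[of "\<lambda>f. f(a := f a - s)" M "E u"] by simp
  qed
  have prob_eq: "measure_pmf.prob M (E s) = measure_pmf.prob M (E t)" if "s \<in> A" for s
    using prob_shift[of "t - s" s] diff_closed[OF A(2) that] that by simp
  have "card A * measure_pmf.prob M (E t) = (\<Sum>s\<in>A. measure_pmf.prob M (E s))"
    using prob_eq by simp
  also have "\<dots> = measure_pmf.prob M (\<Union>s\<in>A. E s)"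
    using A by (intro measure_pmf.finite_measure_finite_Union[symmetric])
      (auto simp: disjoint_family_on_def E_def)
  also have "\<dots> = 1"
  proof (rule measure_pmf.prob_eq_1[THEN iffD2])
    have "f \<in> (\<Union>s\<in>A. E s)" if "f \<in> F" for f
      using that by (auto simp: E_def F_def intro: diff_closed c_range)
    then show "AE f in M. f \<in> (\<Union>s\<in>A. E s)"
      by (intro AE_pmfI) (simp add: M_def set_pmf_of_set[OF F(2,1)])
  qed simp
  finally have "card A * measure_pmf.prob M (E t) = 1" .
  moreover have "card A > 0"
    using A by (auto simp: card_gt_0_iff)
  ultimately show ?thesis
    by (simp add: M_def F_def E_def field_simps)
qed

lemma prob_random_h1_diff_eq:
  fixes a :: "'a::finite"
  assumes "t \<in> cyc_elems L"
    and "\<And>f y. c (f(a := y)) = c f"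
    and "\<And>f. \<forall>x. f x \<in> cyc_elems L \<Longrightarrow> c f \<in> cyc_elems L"
  shows "measure_pmf.prob (random_h1 L) {f. f a - c f = t} = 1 / 2 ^ L"
  using measure_pmf_of_set_coordinate_diff[OF finite_cyc_elems assms(1) cyc_elems_diff assms(2,3)]
  by (simp add: random_h1_def card_cyc_elems)

lemma prob_random_h1_diff_in_zero_all_ones:
  fixes a :: "'a::finite"
  assumes "L \<ge> 1"
    and "\<And>f y. c (f(a := y)) = c f"
    and "\<And>f. \<forall>x. f x \<in> cyc_elems L \<Longrightarrow> c f \<in> cyc_elems L"
  shows "measure_pmf.prob (random_h1 L) {f. f a - c f \<in> {0, all_ones_poly L}} = 1 / 2 ^ (L - 1)"
proof -
  have prob_point: "measure_pmf.prob (random_h1 L) {f. f a - c f = s} = 1 / 2 ^ L"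
    if "s \<in> {0, all_ones_poly L}" for s
    using that
    by (intro prob_random_h1_diff_eq assms(2,3)) (auto simp: zero_in_cyc_elems all_ones_poly_in_cyc_elems)
  have "{f. f a - c f \<in> {0, all_ones_poly L}} = {f. f a - c f = 0} \<union> {f. f a - c f = all_ones_poly L}"
    by auto
  moreover have "all_ones_poly L \<noteq> (0 :: bit poly)"
    using assms(1) by (simp add: all_ones_poly_nonzero)
  ultimately have "measure_pmf.prob (random_h1 L) {f. f a - c f \<in> {0, all_ones_poly L}}
      = measure_pmf.prob (random_h1 L) {f. f a - c f = 0}
        + measure_pmf.prob (random_h1 L) {f. f a - c f = all_ones_poly L}"
    by (auto intro: measure_pmf.finite_measure_Union)
  also have "\<dots> = 2 / 2 ^ L"
    by (simp only: prob_point insertI1 insertI2 singletonI)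
  also have "\<dots> = 1 / 2 ^ (L - 1)"
    using assms(1) by (cases L) auto
  finally show ?thesis .
qed

lemma inverse_two_power_less: "L \<ge> 1 \<Longrightarrow> (1 / 2 ^ L :: real) < 1 / 2 ^ (L - 1)"
  by (cases L) (simp_all add: field_simps)

lemma prob_cyclic_hash_replicate_eq_0:
  fixes a :: "'a::finite"
  assumes "even n" and "L \<ge> 1"
  shows "measure_pmf.prob (random_h1 L) {h1. cyclic_hash L n h1 (replicate n a) = 0} \<ge> 1 / 2 ^ (L - 1)"
proof -
  have "1 / 2 ^ (L - 1) = measure_pmf.prob (random_h1 L) {f. f a - 0 \<in> {0, all_ones_poly L}}"
    by (rule prob_random_h1_diff_in_zero_all_ones[symmetric]) (use assms in \<open>auto simp: zero_in_cyc_elems\<close>)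
  also have "\<dots> \<le> measure_pmf.prob (random_h1 L) {h1. cyclic_hash L n h1 (replicate n a) = 0}"
    by (rule measure_pmf.finite_measure_mono) (auto intro: cyclic_hash_replicate_eq_0[OF assms(1)])
  finally show ?thesis .
qed

lemma prob_cyclic_hash_swap_collision:
  fixes a b :: "'a::finite"
  assumes "a \<noteq> b" and "L \<ge> 1"
  shows "measure_pmf.prob (random_h1 L)
      {h1. cyclic_hash L (Suc (Suc n)) h1 (a # b # w) = cyclic_hash L (Suc (Suc n)) h1 (b # a # w)}
    \<ge> 1 / 2 ^ (L - 1)"
proof -
  have "1 / 2 ^ (L - 1) = measure_pmf.prob (random_h1 L) {f. f a - f b \<in> {0, all_ones_poly L}}"
    by (rule prob_random_h1_diff_in_zero_all_ones[symmetric]) (use assms in auto)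
  also have "\<dots> \<le> measure_pmf.prob (random_h1 L)
      {h1. cyclic_hash L (Suc (Suc n)) h1 (a # b # w) = cyclic_hash L (Suc (Suc n)) h1 (b # a # w)}"
    by (rule measure_pmf.finite_measure_mono) (auto intro: cyclic_hash_swap_eq)
  finally show ?thesis .
qed

lemma exists_colliding_ngrams:
  assumes "n \<ge> 2" and "CARD('a) \<ge> 2" and "L \<ge> 1"
  obtains w1 w2 :: "'a::finite list" where "length w1 = n" "length w2 = n" "w1 \<noteq> w2"
    "measure_pmf.prob (random_h1 L) {h1. cyclic_hash L n h1 w1 = cyclic_hash L n h1 w2} \<ge> 1 / 2 ^ (L - 1)"
proof -
  obtain a b :: 'a where "a \<noteq> b"
    using assms(2) card_le_Suc0_iff_eq[of "UNIV :: 'a set"] by fastforce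
  moreover obtain m where "n = Suc (Suc m)"
    using assms(1) by (metis add_2_eq_Suc le_Suc_ex)
  ultimately show ?thesis
    using that[of "a # b # replicate m a" "b # a # replicate m a"]
      prob_cyclic_hash_swap_collision[OF _ assms(3)] by auto
qed

lemma pairwise_independent_imp_two_universal:
  fixes H :: "('a list \<Rightarrow> bit poly) pmf"
  assumes "\<And>h w. h \<in> set_pmf H \<Longrightarrow> h w \<in> cyc_elems L"
    and "pairwise_independent L n H"
  shows "two_universal L n H"
  unfolding two_universal_def
proof (intro ballI impI)
  fix w1 w2 :: "'a list"
  assume w: "w1 \<in> ngrams n" "w2 \<in> ngrams n" "w1 \<noteq> w2"
  have "measure_pmf.prob H {h. h w1 = h w2} = measure_pmf.prob H (\<Union>y\<in>cyc_elems L. {h. h w1 = y \<and> h w2 = y})"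
    using assms(1) by (intro measure_pmf.finite_measure_eq_AE AE_pmfI) auto
  also have "\<dots> = (\<Sum>y\<in>cyc_elems L. measure_pmf.prob H {h. h w1 = y \<and> h w2 = y})"
    by (intro measure_pmf.finite_measure_finite_Union) (auto simp: finite_cyc_elems disjoint_family_on_def)
  also have "\<dots> = (\<Sum>y\<in>cyc_elems L. 1 / 2 ^ (2 * L))"
    using assms(2) w by (intro sum.cong) (auto simp: pairwise_independent_def)
  also have "\<dots> = 1 / 2 ^ L"
    by (simp add: card_cyc_elems power_add mult_2)
  finally show "measure_pmf.prob H {h. h w1 = h w2} \<le> 1 / 2 ^ L"
    by simp
qed

lemma prob_cyclic_family:
  "measure_pmf.prob (cyclic_family L n) {h. P h} = measure_pmf.prob (random_h1 L) {h1. P (cyclic_hash L n h1)}"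
  by (simp add: cyclic_family_def vimage_def)

lemma cyclic_family_in_cyc_elems: "L \<ge> 1 \<Longrightarrow> h \<in> set_pmf (cyclic_family L n) \<Longrightarrow> h w \<in> cyc_elems L"
  by (auto simp: cyclic_family_def cyclic_hash_in_cyc_elems)

lemma not_uniform_cyclic_family:
  assumes "even n" and "L \<ge> 1"
  shows "\<not> uniform_family L n (cyclic_family L n :: ('a::finite list \<Rightarrow> bit poly) pmf)"
proof
  fix a :: 'a
  assume "uniform_family L n (cyclic_family L n :: ('a list \<Rightarrow> bit poly) pmf)"
  then have "measure_pmf.prob (cyclic_family L n) {h. h (replicate n a) = 0} = 1 / 2 ^ L"
    by (simp add: uniform_family_def ngrams_def zero_in_cyc_elems)
  then have "measure_pmf.prob (random_h1 L) {h1. cyclic_hash L n h1 (replicate n a) = 0} = 1 / 2 ^ L"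
    by (simp add: prob_cyclic_family)
  moreover have "(1 / 2 ^ L :: real) < 1 / 2 ^ (L - 1)"
    using assms(2) by (rule inverse_two_power_less)
  ultimately show False
    using prob_cyclic_hash_replicate_eq_0[OF assms, of a] by simp
qed

lemma not_two_universal_cyclic_family:
  assumes "n \<ge> 2" and "CARD('a::finite) \<ge> 2" and "L \<ge> 1"
  shows "\<not> two_universal L n (cyclic_family L n :: ('a list \<Rightarrow> bit poly) pmf)"
proof
  assume universal: "two_universal L n (cyclic_family L n :: ('a list \<Rightarrow> bit poly) pmf)"
  obtain w1 w2 :: "'a list" where w: "length w1 = n" "length w2 = n" "w1 \<noteq> w2"
    and collision: "measure_pmf.prob (random_h1 L) {h1. cyclic_hash L n h1 w1 = cyclic_hash L n h1 w2} \<ge> 1 / 2 ^ (L - 1)"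
    using exists_colliding_ngrams[OF assms] .
  have "measure_pmf.prob (cyclic_family L n) {h. h w1 = h w2} \<le> 1 / 2 ^ L"
    using universal w by (simp add: two_universal_def ngrams_def)
  then have "measure_pmf.prob (random_h1 L) {h1. cyclic_hash L n h1 w1 = cyclic_hash L n h1 w2} \<le> 1 / 2 ^ L"
    by (simp add: prob_cyclic_family)
  moreover have "(1 / 2 ^ L :: real) < 1 / 2 ^ (L - 1)"
    using assms(3) by (rule inverse_two_power_less)
  ultimately show False
    using collision by simp
qed

theorem mainTheorem5:
  fixes n L :: nat
  assumes "n \<ge> 1" and "L \<ge> n"
  shows "(even n \<longrightarrow>
            \<not> uniform_family L n (cyclic_family L n :: ('a::finite list \<Rightarrow> bit poly) pmf) \<and>
            (\<forall>a::'a. measure_pmf.prob (random_h1 L)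
                        {h1. cyclic_hash L n h1 (replicate n a) = 0} \<ge> 1 / 2 ^ (L - 1)))
       \<and> (n \<ge> 2 \<and> CARD('a) \<ge> 2 \<longrightarrow>
            (\<exists>w1 w2 :: 'a list. length w1 = n \<and> length w2 = n \<and> w1 \<noteq> w2 \<and>
               measure_pmf.prob (random_h1 L)
                 {h1. cyclic_hash L n h1 w1 = cyclic_hash L n h1 w2} \<ge> 1 / 2 ^ (L - 1) \<and>
               (1 / 2 ^ (L - 1) :: real) > 1 / 2 ^ L) \<and>
            \<not> two_universal L n (cyclic_family L n :: ('a list \<Rightarrow> bit poly) pmf) \<and>
            \<not> pairwise_independent L n (cyclic_family L n :: ('a list \<Rightarrow> bit poly) pmf))"
proof -
  have L: "L \<ge> 1"
    using assms by simp
  have not_universal: "\<not> two_universal L n (cyclic_family L n :: ('a list \<Rightarrow> bit poly) pmf)"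
    if "n \<ge> 2" "CARD('a) \<ge> 2"
    using that L by (rule not_two_universal_cyclic_family)
  moreover have "\<not> pairwise_independent L n (cyclic_family L n :: ('a list \<Rightarrow> bit poly) pmf)"
    if "n \<ge> 2" "CARD('a) \<ge> 2"
    using not_universal[OF that] pairwise_independent_imp_two_universal cyclic_family_in_cyc_elems[OF L]
    by blast
  moreover have "\<exists>w1 w2 :: 'a list. length w1 = n \<and> length w2 = n \<and> w1 \<noteq> w2 \<and>
      measure_pmf.prob (random_h1 L) {h1. cyclic_hash L n h1 w1 = cyclic_hash L n h1 w2} \<ge> 1 / 2 ^ (L - 1)"
    if "n \<ge> 2" "CARD('a) \<ge> 2"
    using exists_colliding_ngrams[OF that L] by blast
  ultimately show ?thesis
    using not_uniform_cyclic_family[OF _ L] prob_cyclic_hash_replicate_eq_0[OF _ L]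
      inverse_two_power_less[OF L] by blast
qed

end
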